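(* Let $p$ be a prime, $a,b$ positive integers, $\tau\in\mathbb{Z}$, and $\alpha,\beta\ge0$ integers such that $p^\beta$ exactly divides $\gcd(a,b)$ (i.e. $p^\beta\mid\gcd(a,b)$ but $p^{\beta+1}\nmid\gcd(a,b)$) and $p^\alpha\mid a+b$. Then $p^{\alpha-\beta}$ divides $$\binom{a\tau+a-1}{a}\binom{b\tau+b}{b},$$ i.e. the $p$-adic valuation of this product is at least $\alpha-\beta$.
   Context: For integers $b\geq 0$ and $a\in\mathbb{Z}$ the binomial coefficient is defined by: $\binom{a}{b}=1$ if $b=0$; $\binom{a}{b}$ is the usual binomial coefficient if $b\geq 1$ and $a\geq 0$; and $\binom{a}{b}=(-1)^b\binom{-a+b-1}{b}$ if $b\geq1$ and $a<0$. *)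

theory Defs
  imports "HOL-Computational_Algebra.Primes"
begin

definition gen_binom :: "int \<Rightarrow> nat \<Rightarrow> int" where
  "gen_binom a b =
     (if b = 0 then 1
      else if a \<ge> 0 then int (nat a choose b)
      else (-1) ^ b * int (nat (- a + int b - 1) choose b))"

end

theory Submission
  imports Defs Complex_Main
begin

text \<open>Multiplying out the factorial, the \<open>p\<close>-adic valuation of \<open>binom (y + n) n\<close> is, by Legendre's
  count of the multiples of \<open>p^j\<close> among the consecutive factors \<open>y + 1, ..., y + n\<close>, the number of
  \<open>j \<ge> 1\<close> for which the residues of \<open>y\<close> and \<open>n\<close> modulo \<open>p^j\<close> add up to at least \<open>p^j\<close> (Kummer).
  The two binomials of the theorem have \<open>y = a\<tau> - 1\<close> and \<open>y = b\<tau>\<close>, whose sum plus one is \<open>(a + b)\<tau>\<close>.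
  For \<open>\<beta> < j \<le> \<alpha>\<close> the modulus \<open>q = p^j\<close> divides \<open>a + b\<close> but not \<open>a\<close> (else it would divide
  \<open>gcd a b\<close>), so the residues of \<open>a, b\<close> add up to \<open>q\<close> and those of \<open>a\<tau> - 1, b\<tau>\<close> to \<open>q - 1\<close>.
  The four residues total \<open>2q - 1\<close>, so at least one of the two additions carries, and each of
  these \<open>\<alpha> - \<beta>\<close> values of \<open>j\<close> contributes to the valuation of the product.\<close>

lemma of_int_gen_binom: "(of_int (gen_binom x n) :: 'a :: field_char_0) = of_int x gchoose n"
proof (cases "n = 0 \<or> x \<ge> 0")
  case True
  then show ?thesis
    by (auto simp: gen_binom_def binomial_gbinomial)
next
  case False
  then have "(of_int (gen_binom x n) :: 'a) = (-1) ^ n * (of_nat n - of_int x - 1 gchoose n)"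
    by (simp add: gen_binom_def binomial_gbinomial)
  also have "\<dots> = of_int x gchoose n"
    by (rule gbinomial_negated_upper[symmetric])
  finally show ?thesis .
qed

lemma fact_mult_gen_binom: "int (fact n) * gen_binom x n = (\<Prod>i<n. x - int i)"
proof -
  have "(of_int (int (fact n) * gen_binom x n) :: rat) = fact n * (of_int x gchoose n)"
    by (simp add: of_int_gen_binom)
  also have "\<dots> = of_int (\<Prod>i<n. x - int i)"
    by (simp add: gbinomial_mult_fact lessThan_atLeast0)
  finally show ?thesis
    by (simp only: of_int_eq_iff)
qed

lemma div_diff_div_pred:
  fixes y q :: int
  assumes "q > 0"
  shows "y div q - (y - 1) div q = (if q dvd y then 1 else 0)"
proof (cases "q dvd y")
  case True
  then obtain k where "y = k * q"
    by (metis dvd_def mult.commute)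
  moreover have "(-1 + k * q) div q = k - 1"
    using assms by (simp only: div_mult_self1) (simp add: div_eq_minus1)
  ultimately show ?thesis
    using assms by simp
next
  case False
  then have "y mod q \<noteq> 0"
    by (simp add: dvd_eq_mod_eq_0)
  then have "0 \<le> y mod q - 1" and "y mod q - 1 < q"
    using pos_mod_sign[OF assms, of y] pos_mod_bound[OF assms, of y] by linarith+
  have "y - 1 = (y mod q - 1) + y div q * q"
    by simp
  then have "(y - 1) div q = (y mod q - 1 + y div q * q) div q"
    by (rule arg_cong)
  also have "\<dots> = y div q + (y mod q - 1) div q"
    by (rule div_mult_self1) (use assms in simp)
  also have "\<dots> = y div q"
    using \<open>0 \<le> y mod q - 1\<close> \<open>y mod q - 1 < q\<close> by simp
  finally show ?thesis
    using False by simp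
qed

lemma card_dvd_diff_lessThan:
  fixes q m :: int
  assumes "q > 0"
  shows "int (card {i \<in> {..<n}. q dvd m - int i}) = m div q - (m - int n) div q"
proof (induction n)
  case 0
  then show ?case by simp
next
  case (Suc n)
  have "{i \<in> {..<Suc n}. q dvd m - int i} =
        (if q dvd m - int n then insert n else id) {i \<in> {..<n}. q dvd m - int i}"
    by (auto simp: less_Suc_eq)
  then have "int (card {i \<in> {..<Suc n}. q dvd m - int i}) =
             int (card {i \<in> {..<n}. q dvd m - int i}) + (if q dvd m - int n then 1 else 0)"
    by simp
  then show ?case
    using Suc div_diff_div_pred[OF assms, of "m - int n"] by (simp add: algebra_simps)
qed

lemma multiplicity_le_nat_abs:
  fixes p x :: int
  assumes "prime p" "x \<noteq> 0"
  shows "multiplicity p x \<le> nat \<bar>x\<bar>"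
proof -
  define v where "v = multiplicity p x"
  have "int v < 2 ^ v"
    by (metis less_exp of_nat_less_iff of_nat_numeral of_nat_power)
  also have "\<dots> \<le> p ^ v"
    using prime_ge_2_int[OF assms(1)] by (intro power_mono) auto
  also have "\<dots> \<le> \<bar>x\<bar>"
    using dvd_imp_le_int[OF assms(2) multiplicity_dvd[of p x]] prime_gt_0_int[OF assms(1)]
    by (simp add: v_def)
  finally show ?thesis
    by (simp add: v_def)
qed

lemma multiplicity_eq_card_power_dvd:
  fixes p x :: "'a :: factorial_semiring"
  assumes "x \<noteq> 0" "\<not> is_unit p" "multiplicity p x \<le> M"
  shows "multiplicity p x = card {j \<in> {1..M}. p ^ j dvd x}"
proof -
  have "{j \<in> {1..M}. p ^ j dvd x} = {j \<in> {1..M}. j \<le> multiplicity p x}"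
    by (simp only: power_dvd_iff_le_multiplicity[OF assms(1,2)])
  also have "\<dots> = {1..multiplicity p x}"
    using assms(3) by auto
  finally show ?thesis
    by simp
qed

lemma multiplicity_falling_prod:
  fixes p m :: int
  assumes p: "prime p" and nonzero: "(\<Prod>i<n. m - int i) \<noteq> 0"
    and bounds: "\<bar>m\<bar> \<le> int M" "\<bar>m - int n\<bar> \<le> int M"
  shows "int (multiplicity p (\<Prod>i<n. m - int i)) = (\<Sum>j=1..M. m div p ^ j - (m - int n) div p ^ j)"
proof -
  have card_as_sum: "card {x \<in> A. P x} = (\<Sum>x\<in>A. if P x then 1 else 0)"
    if "finite A" for A :: "nat set" and P
    using that by (simp add: sum.inter_filter[symmetric])
  have factor_nonzero: "m - int i \<noteq> 0" if "i < n" for i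
    using nonzero that by auto
  have "multiplicity p (\<Prod>i<n. m - int i) = (\<Sum>i<n. multiplicity p (m - int i))"
    using prime_imp_prime_elem[OF p] factor_nonzero
    by (intro prime_elem_multiplicity_prod_distrib) auto
  also have "\<dots> = (\<Sum>i<n. card {j \<in> {1..M}. p ^ j dvd m - int i})"
  proof (intro sum.cong refl)
    fix i assume "i \<in> {..<n}"
    then have "multiplicity p (m - int i) \<le> M"
      using multiplicity_le_nat_abs[OF p factor_nonzero] bounds by fastforce
    then show "multiplicity p (m - int i) = card {j \<in> {1..M}. p ^ j dvd m - int i}"
      using \<open>i \<in> {..<n}\<close> p factor_nonzero not_prime_unit
      by (intro multiplicity_eq_card_power_dvd) auto
  qed
  also have "\<dots> = (\<Sum>i<n. \<Sum>j=1..M. if p ^ j dvd m - int i then 1 else 0)"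
    by (intro sum.cong refl card_as_sum) simp
  also have "\<dots> = (\<Sum>j=1..M. \<Sum>i<n. if p ^ j dvd m - int i then 1 else 0)"
    by (rule sum.swap)
  also have "\<dots> = (\<Sum>j=1..M. card {i \<in> {..<n}. p ^ j dvd m - int i})"
    by (intro sum.cong refl card_as_sum[symmetric]) simp
  finally have "int (multiplicity p (\<Prod>i<n. m - int i)) =
      (\<Sum>j=1..M. int (card {i \<in> {..<n}. p ^ j dvd m - int i}))"
    by simp
  also have "\<dots> = (\<Sum>j=1..M. m div p ^ j - (m - int n) div p ^ j)"
    using prime_gt_0_int[OF p] by (intro sum.cong refl card_dvd_diff_lessThan) simp
  finally show ?thesis .
qed

definition carry :: "int \<Rightarrow> int \<Rightarrow> int \<Rightarrow> int" where
  "carry q u v = (u mod q + v mod q) div q"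

lemma carry_nonneg: "q > 0 \<Longrightarrow> carry q u v \<ge> 0"
  by (simp add: carry_def pos_imp_zdiv_nonneg_iff)

lemma carry_pos_iff: "q > 0 \<Longrightarrow> carry q u v > 0 \<longleftrightarrow> q \<le> u mod q + v mod q"
  by (simp add: carry_def pos_imp_zdiv_pos_iff)

lemma multiplicity_gen_binom:
  fixes p y :: int
  assumes p: "prime p" and nonzero: "gen_binom (y + int n) n \<noteq> 0"
    and bound: "\<bar>y\<bar> + int n \<le> int M"
  shows "int (multiplicity p (gen_binom (y + int n) n)) = (\<Sum>j=1..M. carry (p ^ j) y (int n))"
proof -
  let ?B = "gen_binom (y + int n) n"
  have "gen_binom (int n) n = 1"
    by (simp add: gen_binom_def)
  then have fact_falling: "int (fact n) = (\<Prod>i<n. int n - int i)"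
    using fact_mult_gen_binom[of n "int n"] by simp
  have "int (multiplicity p (int (fact n))) = (\<Sum>j=1..M. int n div p ^ j)"
    unfolding fact_falling using p bound by (subst multiplicity_falling_prod) auto
  moreover have "int (multiplicity p (int (fact n) * ?B)) =
      (\<Sum>j=1..M. (y + int n) div p ^ j - y div p ^ j)"
    unfolding fact_mult_gen_binom using p nonzero bound
    by (subst multiplicity_falling_prod) (auto simp flip: fact_mult_gen_binom)
  moreover have "multiplicity p (int (fact n) * ?B) = multiplicity p (int (fact n)) + multiplicity p ?B"
    using p nonzero by (intro prime_elem_multiplicity_mult_distrib) auto
  ultimately have "int (multiplicity p ?B) =
      (\<Sum>j=1..M. (y + int n) div p ^ j - y div p ^ j - int n div p ^ j)"
    by (simp add: sum_subtractf)
  also have "\<dots> = (\<Sum>j=1..M. carry (p ^ j) y (int n))"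
    by (intro sum.cong refl) (simp add: carry_def div_add1_eq[of y "int n"])
  finally show ?thesis .
qed

lemma one_le_carry_add_carry:
  fixes q u v a b :: int
  assumes q: "q > 0" and "q dvd u + v + 1" "q dvd a + b" "\<not> q dvd a"
  shows "carry q u a + carry q v b \<ge> 1"
proof -
  have eq_q: "z = q" if "q dvd z" "0 < z" "z < 2 * q" for z
  proof -
    obtain k where "z = q * k"
      using \<open>q dvd z\<close> ..
    with that q have "0 < k" "k < 2"
      by (simp_all add: zero_less_mult_iff)
    with \<open>z = q * k\<close> show ?thesis
      by simp
  qed
  have residues: "0 \<le> x mod q" "x mod q < q" for x
    using q by simp_all
  have "a mod q \<noteq> 0"
    using assms(4) by (simp add: dvd_eq_mod_eq_0)
  then have "0 < a mod q"
    using residues[of a] by linarith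
  moreover have "q dvd a mod q + b mod q"
    using assms(3) by (simp add: dvd_eq_mod_eq_0 mod_simps)
  ultimately have ab: "a mod q + b mod q = q"
    using residues[of a] residues[of b] by (intro eq_q) linarith+
  have "(u mod q + v mod q + 1) mod q = (u + v + 1) mod q"
    by (metis mod_add_eq mod_add_left_eq)
  then have "q dvd u mod q + v mod q + 1"
    using assms(2) by (simp add: dvd_eq_mod_eq_0)
  then have uv: "u mod q + v mod q + 1 = q"
    using residues[of u] residues[of v] by (intro eq_q) linarith+
  from ab uv have "0 < carry q u a \<or> 0 < carry q v b"
    unfolding carry_pos_iff[OF q] by linarith
  then show ?thesis
    using carry_nonneg[OF q, of u a] carry_nonneg[OF q, of v b] by linarith
qed

lemma one_le_carries_above_gcd_valuation:
  fixes p a b \<tau> :: int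
  assumes p: "p > 0" and gcd: "\<not> p ^ (\<beta> + 1) dvd gcd a b" and sum: "p ^ \<alpha> dvd a + b"
    and j: "\<beta> < j" "j \<le> \<alpha>"
  shows "carry (p ^ j) (a * \<tau> - 1) a + carry (p ^ j) (b * \<tau>) b \<ge> 1"
proof (rule one_le_carry_add_carry)
  show "p ^ j dvd a + b"
    using sum j(2) by (meson dvd_trans le_imp_power_dvd)
  then show "p ^ j dvd a * \<tau> - 1 + b * \<tau> + 1"
    by (simp add: distrib_right[symmetric])
  show "\<not> p ^ j dvd a"
  proof
    assume "p ^ j dvd a"
    with \<open>p ^ j dvd a + b\<close> have "p ^ j dvd gcd a b"
      by (simp add: dvd_add_right_iff)
    moreover have "p ^ (\<beta> + 1) dvd p ^ j"
      using j(1) by (intro le_imp_power_dvd) simp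
    ultimately show False
      using gcd dvd_trans by blast
  qed
qed (use p in simp)

lemma int_diff_le_sum_atLeastAtMost:
  fixes f :: "nat \<Rightarrow> int"
  assumes "\<And>j. f j \<ge> 0" and "\<And>j. \<beta> < j \<Longrightarrow> j \<le> \<alpha> \<Longrightarrow> f j \<ge> 1" and "\<alpha> \<le> M"
  shows "int (\<alpha> - \<beta>) \<le> (\<Sum>j=1..M. f j)"
proof -
  have "int (\<alpha> - \<beta>) = (\<Sum>j\<in>{\<beta><..\<alpha>}. 1)"
    by simp
  also have "\<dots> \<le> (\<Sum>j\<in>{\<beta><..\<alpha>}. f j)"
    using assms(2) by (intro sum_mono) simp
  also have "\<dots> \<le> (\<Sum>j=1..M. f j)"
    using assms(1,3) by (intro sum_mono2) auto
  finally show ?thesis .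
qed

theorem lemma4p1:
  fixes p :: nat and a b \<tau> :: int and \<alpha> \<beta> :: nat
  assumes "prime p" and "a > 0" and "b > 0"
    and "(int p) ^ \<beta> dvd gcd a b" and "\<not> (int p) ^ (\<beta> + 1) dvd gcd a b"
    and "(int p) ^ \<alpha> dvd a + b"
  shows "(int p) ^ (\<alpha> - \<beta>) dvd
           gen_binom (a * \<tau> + a - 1) (nat a) * gen_binom (b * \<tau> + b) (nat b)"
proof -
  let ?A = "gen_binom (a * \<tau> - 1 + int (nat a)) (nat a)"
  let ?B = "gen_binom (b * \<tau> + int (nat b)) (nat b)"
  define M where "M = nat (\<bar>a * \<tau> - 1\<bar> + \<bar>b * \<tau>\<bar> + a + b + int \<alpha>)"
  have bounds: "\<bar>a * \<tau> - 1\<bar> + int (nat a) \<le> int M" "\<bar>b * \<tau>\<bar> + int (nat b) \<le> int M" "\<alpha> \<le> M"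
    using assms(2,3) by (simp_all add: M_def)
  have p: "prime (int p)" "int p > 0"
    using assms(1) by (simp_all add: prime_gt_0_nat)
  \<comment> \<open>Only \<open>p^(\<beta>+1) \<not>| gcd a b\<close> is needed.\<close>
  have "int p ^ (\<alpha> - \<beta>) dvd ?A * ?B"
  proof (cases "?A = 0 \<or> ?B = 0")
    case False
    have "int (\<alpha> - \<beta>) \<le> (\<Sum>j=1..M. carry (int p ^ j) (a * \<tau> - 1) a + carry (int p ^ j) (b * \<tau>) b)"
      using one_le_carries_above_gcd_valuation[OF p(2) assms(5,6)] carry_nonneg p(2) bounds(3)
      by (intro int_diff_le_sum_atLeastAtMost) (auto simp: add_nonneg_nonneg)
    also have "\<dots> = int (multiplicity (int p) ?A) + int (multiplicity (int p) ?B)"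
      using multiplicity_gen_binom[OF p(1) _ bounds(1)] multiplicity_gen_binom[OF p(1) _ bounds(2)]
        False assms(2,3) by (simp add: sum.distrib)
    also have "\<dots> = int (multiplicity (int p) (?A * ?B))"
      using False p(1) by (simp add: prime_elem_multiplicity_mult_distrib)
    finally show ?thesis
      by (intro multiplicity_dvd') simp
  qed auto
  then show ?thesis
    using assms(2,3) by (simp add: algebra_simps)
qed

end
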